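(* Let $A$ be a partial ring. If $a_1,a_2,a\in A$ and $(a_1\dotplus a_2,\,a)\in R(A)$, then $(a_1,a_2)\in A_2$ and $a_1+a_2=a$.
   Context: A partial ring is a set $A$ with $0$, a set $A_2\subseteq A\times A$ of summable pairs and a partial addition $+\colon A_2\to A$ ($0$ a unit summable with everything; commutative; associative in the sense: $(a,b),(a+b,c)\in A_2$ iff $(b,c),(a,b+c)\in A_2$, and then $(a+b)+c=a+(b+c)$), together with a commutative associative multiplication with unit $1$ such that $0\cdot a=0$ and $(a_1,a_2)\in A_2\Rightarrow(a_1x,a_2x)\in A_2$, $(a_1+a_2)x=a_1x+a_2x$. Let $\mathbb{N}[A]$ be the monoid semiring of the multiplicative monoid of $A$; additively it is the free commutative monoid on the underlying set of $A$, with elements written $b_1\dotplus\cdots\dotplus b_r$ (the empty sum, denoted $\emptyset$, is its additive zero, distinct from the element $0\in A$). Let $R_1(A)=\{(0\dotplus x,\,x),\ (a_1\dotplus a_2\dotplus x,\,(a_1+a_2)\dotplus x) : (a_1,a_2)\in A_2,\ x\in\mathbb{N}[A]\}$, and let $R(A)$ be the smallest equivalence relation on $\mathbb{N}[A]$ containing $R_1(A)$. *)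

theory Defs
  imports Main "HOL-Library.Multiset"
begin

text \<open>A partial ring on the carrier type 'a: zero z, summable pairs S, partial addition pl
  (only meaningful on S), multiplication mul with unit one.\<close>

definition partial_ring ::
  "'a \<Rightarrow> ('a \<times> 'a) set \<Rightarrow> ('a \<Rightarrow> 'a \<Rightarrow> 'a) \<Rightarrow> 'a \<Rightarrow> ('a \<Rightarrow> 'a \<Rightarrow> 'a) \<Rightarrow> bool" where
  "partial_ring z S pl one mul \<longleftrightarrow>
     (\<forall>a. (z, a) \<in> S \<and> pl z a = a) \<and>
     (\<forall>a b. (a, b) \<in> S \<longrightarrow> (b, a) \<in> S \<and> pl a b = pl b a) \<and>
     (\<forall>a b c. ((a, b) \<in> S \<and> (pl a b, c) \<in> S) \<longleftrightarrow> ((b, c) \<in> S \<and> (a, pl b c) \<in> S)) \<and>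
     (\<forall>a b c. (a, b) \<in> S \<and> (pl a b, c) \<in> S \<longrightarrow> pl (pl a b) c = pl a (pl b c)) \<and>
     (\<forall>a b. mul a b = mul b a) \<and>
     (\<forall>a b c. mul (mul a b) c = mul a (mul b c)) \<and>
     (\<forall>a. mul one a = a) \<and>
     (\<forall>a. mul z a = z) \<and>
     (\<forall>a1 a2 x. (a1, a2) \<in> S \<longrightarrow> (mul a1 x, mul a2 x) \<in> S \<and> mul (pl a1 a2) x = pl (mul a1 x) (mul a2 x))"

text \<open>N[A] additively = free commutative monoid on A = 'a multiset; b1 \<dotplus> ... \<dotplus> br = {#b1,...,br#}.\<close>

definition R1 :: "'a \<Rightarrow> ('a \<times> 'a) set \<Rightarrow> ('a \<Rightarrow> 'a \<Rightarrow> 'a) \<Rightarrow> ('a multiset \<times> 'a multiset) set" where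
  "R1 z S pl =
     {({#z#} + x, x) | x. True} \<union>
     {({#a1, a2#} + x, {#pl a1 a2#} + x) | a1 a2 x. (a1, a2) \<in> S}"

definition R :: "'a \<Rightarrow> ('a \<times> 'a) set \<Rightarrow> ('a \<Rightarrow> 'a \<Rightarrow> 'a) \<Rightarrow> ('a multiset \<times> 'a multiset) set" where
  "R z S pl = (R1 z S pl \<union> (R1 z S pl)\<inverse>)\<^sup>*"

end

theory Submission
  imports Defs
begin

text \<open>Every finite multiset \<open>M\<close> over a partial commutative monoid has a partial sum in
  \<open>'a option\<close>: add its elements one at a time, starting from \<open>z\<close>, and return \<open>None\<close> as soon as
  a pair is not summable. Partial commutativity and associativity make the result independent of
  the order of the elements, and both kinds of generators of \<open>R1\<close> preserve it; hence it is an
  invariant of \<open>R\<close>. Since \<open>{#a#}\<close> sums to \<open>a\<close>, so does \<open>{#a1, a2#}\<close>, which says exactly that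
  \<open>(a1, a2)\<close> is summable with sum \<open>a\<close>.\<close>

locale partial_comm_monoid =
  fixes z :: 'a and S :: "('a \<times> 'a) set" and pl :: "'a \<Rightarrow> 'a \<Rightarrow> 'a"
  assumes zero_summable: "(z, a) \<in> S"
    and zero_add: "pl z a = a"
    and summable_commute: "(a, b) \<in> S \<Longrightarrow> (b, a) \<in> S"
    and add_commute: "(a, b) \<in> S \<Longrightarrow> pl a b = pl b a"
    and summable_assoc: "(a, b) \<in> S \<and> (pl a b, c) \<in> S \<longleftrightarrow> (b, c) \<in> S \<and> (a, pl b c) \<in> S"
    and add_assoc: "(a, b) \<in> S \<Longrightarrow> (pl a b, c) \<in> S \<Longrightarrow> pl (pl a b) c = pl a (pl b c)"

lemma partial_ring_imp_partial_comm_monoid: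
  assumes "partial_ring z S pl one mul"
  shows "partial_comm_monoid z S pl"
  using assms unfolding partial_ring_def by unfold_locales blast+

context partial_comm_monoid
begin

lemma summable_zero [simp]: "(a, z) \<in> S"
  using summable_commute[OF zero_summable] .

lemma add_zero [simp]: "pl a z = a"
  using add_commute[OF zero_summable] zero_add by simp

lemma summable_left_commute:
  "(b, s) \<in> S \<and> (a, pl b s) \<in> S \<longleftrightarrow> (a, s) \<in> S \<and> (b, pl a s) \<in> S"
proof -
  have "(b, s) \<in> S \<and> (a, pl b s) \<in> S \<longleftrightarrow> (a, b) \<in> S \<and> (pl a b, s) \<in> S"
    using summable_assoc by blast
  also have "\<dots> \<longleftrightarrow> (b, a) \<in> S \<and> (pl b a, s) \<in> S"
    using summable_commute add_commute by metis
  also have "\<dots> \<longleftrightarrow> (a, s) \<in> S \<and> (b, pl a s) \<in> S"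
    using summable_assoc by blast
  finally show ?thesis .
qed

lemma add_left_commute:
  assumes "(b, s) \<in> S" and "(a, pl b s) \<in> S"
  shows "pl a (pl b s) = pl b (pl a s)"
proof -
  have ab: "(a, b) \<in> S" "(pl a b, s) \<in> S"
    using assms summable_assoc by blast+
  have commute: "pl a b = pl b a"
    using add_commute[OF ab(1)] .
  have ba: "(b, a) \<in> S" "(pl b a, s) \<in> S"
    using summable_commute[OF ab(1)] ab(2) commute by simp_all
  have "pl a (pl b s) = pl (pl a b) s"
    using add_assoc[OF ab] by simp
  also have "\<dots> = pl (pl b a) s"
    using commute by simp
  also have "\<dots> = pl b (pl a s)"
    using add_assoc[OF ba] .
  finally show ?thesis .
qed

definition add_opt :: "'a \<Rightarrow> 'a option \<Rightarrow> 'a option" where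
  "add_opt a t = Option.bind t (\<lambda>s. if (a, s) \<in> S then Some (pl a s) else None)"

lemma add_opt_None [simp]: "add_opt a None = None"
  by (simp add: add_opt_def)

lemma add_opt_Some [simp]: "add_opt a (Some s) = (if (a, s) \<in> S then Some (pl a s) else None)"
  by (simp add: add_opt_def)

lemma add_opt_left_commute: "add_opt a (add_opt b t) = add_opt b (add_opt a t)"
proof (cases t)
  case None
  then show ?thesis by simp
next
  case (Some s)
  show ?thesis
  proof (cases "(b, s) \<in> S \<and> (a, pl b s) \<in> S")
    case True
    then have "(a, s) \<in> S \<and> (b, pl a s) \<in> S"
      using summable_left_commute by blast
    with True Some show ?thesis
      using add_left_commute by simp
  next
    case False
    then have "\<not> ((a, s) \<in> S \<and> (b, pl a s) \<in> S)"
      using summable_left_commute by blast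
    with False Some show ?thesis by auto
  qed
qed

lemma add_opt_assoc:
  assumes "(a1, a2) \<in> S"
  shows "add_opt a1 (add_opt a2 t) = add_opt (pl a1 a2) t"
proof (cases t)
  case None
  then show ?thesis by simp
next
  case (Some s)
  have "(a2, s) \<in> S \<and> (a1, pl a2 s) \<in> S \<longleftrightarrow> (pl a1 a2, s) \<in> S"
    using summable_assoc assms by blast
  with Some show ?thesis
    using add_assoc[OF assms] by auto
qed

lemma comp_fun_commute_add_opt: "comp_fun_commute add_opt"
  by unfold_locales (simp add: fun_eq_iff add_opt_left_commute)

definition msum :: "'a multiset \<Rightarrow> 'a option" where
  "msum = fold_mset add_opt (Some z)"

lemma msum_empty [simp]: "msum {#} = Some z"
  by (simp add: msum_def)

lemma msum_add_mset [simp]: "msum (add_mset a M) = add_opt a (msum M)"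
  unfolding msum_def by (rule comp_fun_commute.fold_mset_add_mset[OF comp_fun_commute_add_opt])

lemma zero_add_opt [simp]: "add_opt z t = t"
  by (cases t) (simp_all add: zero_summable zero_add)

lemma msum_R1:
  assumes "(M, N) \<in> R1 z S pl"
  shows "msum M = msum N"
proof -
  from assms consider x where "M = {#z#} + x" "N = x"
    | a1 a2 x where "M = {#a1, a2#} + x" "N = {#pl a1 a2#} + x" "(a1, a2) \<in> S"
    unfolding R1_def by blast
  then show ?thesis
    by cases (simp_all add: add_opt_assoc)
qed

lemma msum_R: "(M, N) \<in> R z S pl \<Longrightarrow> msum M = msum N"
  unfolding R_def by (induction rule: rtrancl_induct) (auto dest: msum_R1)

lemma R_pair_singleton_imp_sum:
  assumes "({#a1, a2#}, {#a#}) \<in> R z S pl"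
  shows "(a1, a2) \<in> S \<and> pl a1 a2 = a"
  using msum_R[OF assms] by (simp split: if_splits)

end

theorem mainTheorem16:
  fixes z one :: 'a and S :: "('a \<times> 'a) set" and pl mul :: "'a \<Rightarrow> 'a \<Rightarrow> 'a"
    and a1 a2 a :: 'a
  assumes "partial_ring z S pl one mul"
    and "({#a1, a2#}, {#a#}) \<in> R z S pl"
  shows "(a1, a2) \<in> S \<and> pl a1 a2 = a"
proof -
  interpret partial_comm_monoid z S pl
    using partial_ring_imp_partial_comm_monoid[OF assms(1)] .
  show ?thesis
    using R_pair_singleton_imp_sum[OF assms(2)] .
qed

end
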